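(* Let $k,n$ be sufficiently large, let $\Phi$ be a quasirandom $k$-CNF on $x_1,\dots,x_n$ and let $\mathcal M$ be a mist of $\Phi$ satisfying (Q1)–(Q3). Let $\omega=\lceil\exp(n/k^2)\rceil$, consider the run $(\sigma^{[t]})$ of Walksat$(\Phi,\omega)$ and let $\mathcal A$ be the event $\sigma^{[0]}\notin\mathcal D(\Phi,\mathcal M)$. Let $\tau_1\notin T(\Phi)$ and $\mu\in\mathcal M$ be such that $\mathrm{dist}(\tau_1,\mu)=\lfloor10\kappa n\rfloor$. Then for all $1\le t_1\le t_2\le\omega$, $$\Pr\big[H_\mu(t_1,t_2)\,\big|\,\mathcal A,\ \sigma^{[t_1]}=\tau_1\big]\le\exp(-\kappa n/2).$$
   Context: $\Phi=\Phi_1\wedge\dots\wedge\Phi_m$ with clauses $\Phi_i=\Phi_{i1}\vee\dots\vee\Phi_{ik}$; $|\Phi_{ij}|$ is the variable of literal $\Phi_{ij}$. $\rho=2^{-k}m/n$, $\kappa=\ln k/k$. $U_\Phi(\sigma)$ is the set of indices of clauses unsatisfied by $\sigma$, $\mathcal U_\Phi(\sigma)=|U_\Phi(\sigma)|$, $T(\Phi)=\{\tau:\mathcal U_\Phi(\tau)\le n\rho/10\}$. $\mathrm{dist}$ is Hamming distance, $\Delta(\sigma,\tau)$ the set of variables where $\sigma,\tau$ differ, $\mathcal D_\sigma(r_1,r_2)=\{\tau:\lfloor r_1\kappa n\rfloor\le\mathrm{dist}(\sigma,\tau)\le\lfloor r_2\kappa n\rfloor\}$, $X_\Phi(W,\sigma)=\sum_{i\in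 U_\Phi(\sigma)}\sum_{j\in[k]}\mathbf 1\{|\Phi_{ij}|\in W\}$. A mist is $\mathcal M\subseteq T(\Phi)$ with pairwise distances at least $2\kappa n$ such that every $\sigma\in T(\Phi)$ is within distance $2\kappa n$ of some element of $\mathcal M$; $\mathcal D(\Phi,\mathcal M)=\bigcup_{\sigma\in\mathcal M}\mathcal D_\sigma(0,10)$. Conditions: (Q1) $|\mathcal D(\Phi,\mathcal M)|\le2^n\exp(-2n/k^2)$; (Q2) $|\mathcal M\cap\mathcal D_\tau(0,10)|\le k$ for all $\tau$; (Q3) for all $\mu\in\mathcal M$, $\sigma\in\mathcal D_\mu(0,100)\setminus T(\Phi)$: $X_\Phi(\Delta(\mu,\sigma),\sigma)\le k\,\mathcal U_\Phi(\sigma)/10$. $\Phi$ is quasirandom if such a mist exists. Walksat$(\Phi,\omega)$: $\sigma^{[0]}$ uniform; at each step $i\le\omega$, halt if $\sigma^{[i]}$ satisfies $\Phi$, otherwise pick a uniformly random unsatisfied clause and uniformly random position $j\in[k]$ and flip that literal's variable to get $\sigma^{[i+1]}$. $H_\mu(t_1,t_2)$ is the event that $\mathrm{dist}(\sigma^{[t_1]},\mu)=\lfloor10\kappa n\rfloor$, $\mathrm{dist}(\sigma^{[t_2]},\mu)=\lfloor5\kappa n\rfloor$, and $\sigma^{[t]}\in\mathcal D_\mu(5,10)\setminus T(\Phi)$ for all $t_1\le t\le t_2$. *)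

theory Defs
  imports "HOL-Probability.Probability"
begin

text \<open>Variables are 0,...,n-1. A literal is a pair (variable, sign); it is true under
  sigma iff sigma (variable) = sign.\<close>

type_synonym lit = "nat \<times> bool"
type_synonym clause = "lit list"
type_synonym cnf = "clause list"
type_synonym assignment = "nat \<Rightarrow> bool"

definition assigns :: "nat \<Rightarrow> assignment set" where
  "assigns n = {\<sigma>. \<forall>i. n \<le> i \<longrightarrow> \<not> \<sigma> i}"

definition kcnf :: "nat \<Rightarrow> nat \<Rightarrow> cnf \<Rightarrow> bool" where
  "kcnf n k \<Phi> \<longleftrightarrow> (\<forall>c\<in>set \<Phi>. length c = k \<and> (\<forall>l\<in>set c. fst l < n))"

definition rho :: "nat \<Rightarrow> nat \<Rightarrow> cnf \<Rightarrow> real" where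
  "rho n k \<Phi> = real (length \<Phi>) / (2 ^ k * real n)"

definition kappa :: "nat \<Rightarrow> real" where
  "kappa k = ln (real k) / real k"

definition unsat_idx :: "cnf \<Rightarrow> assignment \<Rightarrow> nat set" where
  "unsat_idx \<Phi> \<sigma> = {i. i < length \<Phi> \<and> (\<forall>l\<in>set (\<Phi> ! i). \<sigma> (fst l) \<noteq> snd l)}"

definition numU :: "cnf \<Rightarrow> assignment \<Rightarrow> nat" where
  "numU \<Phi> \<sigma> = card (unsat_idx \<Phi> \<sigma>)"

definition Tset :: "nat \<Rightarrow> nat \<Rightarrow> cnf \<Rightarrow> assignment set" where
  "Tset n k \<Phi> = {\<tau> \<in> assigns n. real (numU \<Phi> \<tau>) \<le> real n * rho n k \<Phi> / 10}"

definition Delta :: "nat \<Rightarrow> assignment \<Rightarrow> assignment \<Rightarrow> nat set" where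
  "Delta n \<sigma> \<tau> = {i. i < n \<and> \<sigma> i \<noteq> \<tau> i}"

definition hdist :: "nat \<Rightarrow> assignment \<Rightarrow> assignment \<Rightarrow> nat" where
  "hdist n \<sigma> \<tau> = card (Delta n \<sigma> \<tau>)"

definition Dball :: "nat \<Rightarrow> nat \<Rightarrow> assignment \<Rightarrow> real \<Rightarrow> real \<Rightarrow> assignment set" where
  "Dball n k \<sigma> r1 r2 = {\<tau> \<in> assigns n.
      \<lfloor>r1 * kappa k * real n\<rfloor> \<le> int (hdist n \<sigma> \<tau>) \<and> int (hdist n \<sigma> \<tau>) \<le> \<lfloor>r2 * kappa k * real n\<rfloor>}"

definition Xcnt :: "nat \<Rightarrow> cnf \<Rightarrow> nat set \<Rightarrow> assignment \<Rightarrow> nat" where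
  "Xcnt k \<Phi> W \<sigma> = (\<Sum>i\<in>unsat_idx \<Phi> \<sigma>. \<Sum>j<k. if fst (\<Phi> ! i ! j) \<in> W then 1 else 0)"

definition is_mist :: "nat \<Rightarrow> nat \<Rightarrow> cnf \<Rightarrow> assignment set \<Rightarrow> bool" where
  "is_mist n k \<Phi> M \<longleftrightarrow> M \<subseteq> Tset n k \<Phi>
     \<and> (\<forall>\<sigma>\<in>M. \<forall>\<tau>\<in>M. \<sigma> \<noteq> \<tau> \<longrightarrow> 2 * kappa k * real n \<le> real (hdist n \<sigma> \<tau>))
     \<and> (\<forall>\<sigma>\<in>Tset n k \<Phi>. \<exists>\<mu>\<in>M. real (hdist n \<sigma> \<mu>) \<le> 2 * kappa k * real n)"

definition Dmist :: "nat \<Rightarrow> nat \<Rightarrow> assignment set \<Rightarrow> assignment set" where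
  "Dmist n k M = (\<Union>\<sigma>\<in>M. Dball n k \<sigma> 0 10)"

definition Q1 :: "nat \<Rightarrow> nat \<Rightarrow> assignment set \<Rightarrow> bool" where
  "Q1 n k M \<longleftrightarrow> real (card (Dmist n k M)) \<le> 2 ^ n * exp (- 2 * real n / (real k)\<^sup>2)"

definition Q2 :: "nat \<Rightarrow> nat \<Rightarrow> assignment set \<Rightarrow> bool" where
  "Q2 n k M \<longleftrightarrow> (\<forall>\<tau>\<in>assigns n. card (M \<inter> Dball n k \<tau> 0 10) \<le> k)"

definition Q3 :: "nat \<Rightarrow> nat \<Rightarrow> cnf \<Rightarrow> assignment set \<Rightarrow> bool" where
  "Q3 n k \<Phi> M \<longleftrightarrow> (\<forall>\<mu>\<in>M. \<forall>\<sigma>\<in>Dball n k \<mu> 0 100 - Tset n k \<Phi>.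
      real (Xcnt k \<Phi> (Delta n \<mu> \<sigma>) \<sigma>) \<le> real k * real (numU \<Phi> \<sigma>) / 10)"

definition flip :: "assignment \<Rightarrow> nat \<Rightarrow> assignment" where
  "flip \<sigma> v = \<sigma>(v := \<not> \<sigma> v)"

definition walk_step :: "nat \<Rightarrow> cnf \<Rightarrow> assignment \<Rightarrow> assignment pmf" where
  "walk_step k \<Phi> \<sigma> = (if unsat_idx \<Phi> \<sigma> = {} then return_pmf \<sigma> else
     bind_pmf (pmf_of_set (unsat_idx \<Phi> \<sigma>)) (\<lambda>i.
     bind_pmf (pmf_of_set {..<k}) (\<lambda>j.
     return_pmf (flip \<sigma> (fst (\<Phi> ! i ! j))))))"

text \<open>Distribution of the trajectory [sigma^[0], ..., sigma^[N]]; after halting the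
  assignment stays constant.\<close>
fun walk_traj :: "nat \<Rightarrow> nat \<Rightarrow> cnf \<Rightarrow> nat \<Rightarrow> assignment list pmf" where
  "walk_traj n k \<Phi> 0 = map_pmf (\<lambda>\<sigma>. [\<sigma>]) (pmf_of_set (assigns n))"
| "walk_traj n k \<Phi> (Suc N) = bind_pmf (walk_traj n k \<Phi> N)
     (\<lambda>xs. map_pmf (\<lambda>\<sigma>'. xs @ [\<sigma>']) (walk_step k \<Phi> (last xs)))"

definition Hevent :: "nat \<Rightarrow> nat \<Rightarrow> cnf \<Rightarrow> assignment \<Rightarrow> nat \<Rightarrow> nat \<Rightarrow> assignment list set" where
  "Hevent n k \<Phi> \<mu> t1 t2 = {xs.
      int (hdist n (xs ! t1) \<mu>) = \<lfloor>10 * kappa k * real n\<rfloor>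
    \<and> int (hdist n (xs ! t2) \<mu>) = \<lfloor>5 * kappa k * real n\<rfloor>
    \<and> (\<forall>t. t1 \<le> t \<and> t \<le> t2 \<longrightarrow> xs ! t \<in> Dball n k \<mu> 5 10 - Tset n k \<Phi>)}"

definition cond_prob :: "'a pmf \<Rightarrow> 'a set \<Rightarrow> 'a set \<Rightarrow> real" where
  "cond_prob p E C = measure_pmf.prob p (E \<inter> C) / measure_pmf.prob p C"

end

theory Submission
  imports Defs
begin

text \<open>Measure the progress of the walk towards \<open>\<mu>\<close> by the potential
  \<open>W \<sigma> = 3 powr (\<lfloor>10\<kappa>n\<rfloor> - dist \<sigma> \<mu>)\<close>. A step flips a variable of a random
  unsatisfied clause: a variable of \<open>\<Delta>(\<sigma>,\<mu>)\<close> multiplies \<open>W\<close> by 3, any other one by 1/3.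
  By (Q3) at most a tenth of these literals lie in \<open>\<Delta>(\<sigma>,\<mu>)\<close> while \<open>\<sigma>\<close> stays in
  \<open>D\<^sub>\<mu>(5,10) - T(\<Phi>)\<close>, so \<open>W\<close> along the walk stopped on leaving this region is a
  supermartingale. It equals 1 at time \<open>t\<^sub>1\<close> and is \<open>3 powr (\<lfloor>10\<kappa>n\<rfloor> - \<lfloor>5\<kappa>n\<rfloor>) \<ge> exp (\<kappa>n/2)\<close>
  at time \<open>t\<^sub>2\<close> on \<open>H\<^sub>\<mu>(t\<^sub>1,t\<^sub>2)\<close>, and Markov's inequality gives the bound.\<close>

text \<open>Events of trajectories that depend only on the entries up to index \<open>N\<close>, phrased via
  one-step extensions because that is how \<open>walk_traj\<close> grows.\<close>

definition determined_upto :: "nat \<Rightarrow> 'a list set \<Rightarrow> bool" where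
  "determined_upto N E \<longleftrightarrow> (\<forall>xs x. N < length xs \<longrightarrow> (xs @ [x] \<in> E \<longleftrightarrow> xs \<in> E))"

lemma determined_upto_mono: "N \<le> M \<Longrightarrow> determined_upto N E \<Longrightarrow> determined_upto M E"
  unfolding determined_upto_def by auto

lemma determined_upto_Int:
  "determined_upto N E \<Longrightarrow> determined_upto N F \<Longrightarrow> determined_upto N (E \<inter> F)"
  unfolding determined_upto_def by auto

lemma determined_upto_nth: "i \<le> N \<Longrightarrow> determined_upto N {xs. P (xs ! i)}"
  by (simp add: determined_upto_def nth_append_left)

lemma walk_traj_length: "xs \<in> set_pmf (walk_traj n k \<Phi> N) \<Longrightarrow> length xs = Suc N"
  by (induction N arbitrary: xs) auto

lemma nn_integral_walk_traj_extend:
  assumes f: "\<And>xs x. N < length xs \<Longrightarrow> f (xs @ [x]) = f xs" and "N \<le> M"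
  shows "(\<integral>\<^sup>+xs. f xs \<partial>walk_traj n k \<Phi> M) = (\<integral>\<^sup>+xs. f xs \<partial>walk_traj n k \<Phi> N)"
  using \<open>N \<le> M\<close>
proof (induction M rule: dec_induct)
  case (step M)
  have "AE xs in walk_traj n k \<Phi> M. (\<integral>\<^sup>+x. f (xs @ [x]) \<partial>walk_step k \<Phi> (last xs)) = f xs"
  proof (rule AE_pmfI)
    fix xs assume "xs \<in> set_pmf (walk_traj n k \<Phi> M)"
    with step.hyps have "N < length xs" by (auto dest: walk_traj_length)
    then show "(\<integral>\<^sup>+x. f (xs @ [x]) \<partial>walk_step k \<Phi> (last xs)) = f xs"
      by (simp add: f measure_pmf.emeasure_space_1)
  qed
  then have "(\<integral>\<^sup>+xs. f xs \<partial>walk_traj n k \<Phi> (Suc M)) = (\<integral>\<^sup>+xs. f xs \<partial>walk_traj n k \<Phi> M)"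
    by (simp add: nn_integral_cong_AE)
  with step.IH show ?case by simp
qed simp

lemma emeasure_walk_traj_extend:
  assumes "determined_upto N E" and "N \<le> M"
  shows "emeasure (walk_traj n k \<Phi> M) E = emeasure (walk_traj n k \<Phi> N) E"
proof -
  have "indicator E (xs @ [x]) = (indicator E xs :: ennreal)" if "N < length xs" for xs x
    using assms(1) that by (simp add: determined_upto_def indicator_def)
  from nn_integral_walk_traj_extend[of N "indicator E", OF this \<open>N \<le> M\<close>] show ?thesis
    by simp
qed

lemma walk_traj_stopped_potential_le:
  assumes drift: "\<And>\<sigma>. \<sigma> \<in> R \<Longrightarrow> (\<integral>\<^sup>+x. ennreal (W x) \<partial>walk_step k \<Phi> \<sigma>) \<le> ennreal (W \<sigma>)"
    and C: "determined_upto t0 C" and "t0 \<le> s"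
  shows "(\<integral>\<^sup>+xs. (if xs \<in> C \<and> (\<forall>t. t0 \<le> t \<and> t < s \<longrightarrow> xs ! t \<in> R) then ennreal (W (xs ! s)) else 0)
      \<partial>walk_traj n k \<Phi> s)
    \<le> (\<integral>\<^sup>+xs. indicator C xs * ennreal (W (xs ! t0)) \<partial>walk_traj n k \<Phi> t0)"
  using \<open>t0 \<le> s\<close>
proof (induction s rule: dec_induct)
  case base
  show ?case by (intro nn_integral_mono) (simp add: indicator_def)
next
  case (step s)
  define G where "G = (\<lambda>s xs. if xs \<in> C \<and> (\<forall>t. t0 \<le> t \<and> t < s \<longrightarrow> xs ! t \<in> R)
    then ennreal (W (xs ! s)) else 0)"
  have "AE xs in walk_traj n k \<Phi> s.
      (\<integral>\<^sup>+x. G (Suc s) (xs @ [x]) \<partial>walk_step k \<Phi> (last xs)) \<le> G s xs"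
  proof (rule AE_pmfI)
    fix xs assume "xs \<in> set_pmf (walk_traj n k \<Phi> s)"
    then have len: "length xs = Suc s" by (rule walk_traj_length)
    then have last_xs: "last xs = xs ! s"
      by (metis diff_Suc_1 last_conv_nth list.size(3) nat.distinct(1))
    define alive where "alive = (xs \<in> C \<and> (\<forall>t. t0 \<le> t \<and> t < s \<longrightarrow> xs ! t \<in> R) \<and> xs ! s \<in> R)"
    have G_Suc: "G (Suc s) (xs @ [x]) = (if alive then ennreal (W x) else 0)" for x
    proof -
      have "xs @ [x] \<in> C \<longleftrightarrow> xs \<in> C"
        using C len step.hyps by (simp add: determined_upto_def)
      moreover have "(\<forall>t. t0 \<le> t \<and> t < Suc s \<longrightarrow> (xs @ [x]) ! t \<in> R)
          \<longleftrightarrow> (\<forall>t. t0 \<le> t \<and> t < s \<longrightarrow> xs ! t \<in> R) \<and> xs ! s \<in> R"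
        using len step.hyps by (auto simp: nth_append_left less_Suc_eq)
      moreover have "(xs @ [x]) ! Suc s = x"
        using len by (metis nth_append_length)
      ultimately show ?thesis
        unfolding G_def alive_def by auto
    qed
    show "(\<integral>\<^sup>+x. G (Suc s) (xs @ [x]) \<partial>walk_step k \<Phi> (last xs)) \<le> G s xs"
    proof (cases alive)
      case True
      then have "(\<integral>\<^sup>+x. G (Suc s) (xs @ [x]) \<partial>walk_step k \<Phi> (last xs))
          = (\<integral>\<^sup>+x. ennreal (W x) \<partial>walk_step k \<Phi> (xs ! s))"
        by (simp add: G_Suc last_xs)
      also have "\<dots> \<le> ennreal (W (xs ! s))"
        using True by (simp add: alive_def drift)
      also have "\<dots> = G s xs"
        using True by (simp add: alive_def G_def)
      finally show ?thesis .
    qed (simp add: G_Suc)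
  qed
  then have "(\<integral>\<^sup>+xs. G (Suc s) xs \<partial>walk_traj n k \<Phi> (Suc s)) \<le> (\<integral>\<^sup>+xs. G s xs \<partial>walk_traj n k \<Phi> s)"
    by (simp add: nn_integral_mono_AE)
  with step.IH show ?case
    unfolding G_def by simp
qed

lemma cond_prob_walk_traj_le:
  fixes W :: "assignment \<Rightarrow> real" and c :: real
  assumes drift: "\<And>\<sigma>. \<sigma> \<in> R \<Longrightarrow> (\<integral>\<^sup>+x. ennreal (W x) \<partial>walk_step k \<Phi> \<sigma>) \<le> ennreal (W \<sigma>)"
    and C: "determined_upto t1 C" and H: "determined_upto t2 H"
    and C_start: "\<And>xs. xs \<in> C \<Longrightarrow> W (xs ! t1) \<le> 1"
    and H_path: "\<And>xs t. xs \<in> H \<Longrightarrow> t1 \<le> t \<Longrightarrow> t < t2 \<Longrightarrow> xs ! t \<in> R"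
    and H_end: "\<And>xs. xs \<in> H \<Longrightarrow> c \<le> W (xs ! t2)"
    and "0 < c" "t1 \<le> t2" "t2 \<le> N"
  shows "cond_prob (walk_traj n k \<Phi> N) H C \<le> 1 / c"
proof -
  let ?T = "walk_traj n k \<Phi>"
  have "ennreal c * emeasure (?T t2) (H \<inter> C) = (\<integral>\<^sup>+xs. ennreal c * indicator (H \<inter> C) xs \<partial>?T t2)"
    by (simp add: nn_integral_cmult_indicator)
  also have "\<dots> \<le> (\<integral>\<^sup>+xs. (if xs \<in> C \<and> (\<forall>t. t1 \<le> t \<and> t < t2 \<longrightarrow> xs ! t \<in> R)
      then ennreal (W (xs ! t2)) else 0) \<partial>?T t2)"
    using H_path H_end by (intro nn_integral_mono) (auto simp: indicator_def ennreal_leI)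
  also have "\<dots> \<le> (\<integral>\<^sup>+xs. indicator C xs * ennreal (W (xs ! t1)) \<partial>?T t1)"
    by (rule walk_traj_stopped_potential_le[OF drift C \<open>t1 \<le> t2\<close>])
  also have "\<dots> \<le> (\<integral>\<^sup>+xs. indicator C xs \<partial>?T t1)"
    by (intro nn_integral_mono) (simp add: indicator_def C_start)
  finally have "ennreal c * emeasure (?T t2) (H \<inter> C) \<le> emeasure (?T t1) C"
    by simp
  moreover have "emeasure (?T N) (H \<inter> C) = emeasure (?T t2) (H \<inter> C)"
    using assms by (intro emeasure_walk_traj_extend determined_upto_Int determined_upto_mono[OF _ C])
  moreover have "emeasure (?T N) C = emeasure (?T t1) C"
    using assms by (intro emeasure_walk_traj_extend C) simp
  ultimately have "c * measure (?T N) (H \<inter> C) \<le> measure (?T N) C"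
    using \<open>0 < c\<close> by (simp add: measure_pmf.emeasure_eq_measure ennreal_mult[symmetric])
  then show ?thesis
    unfolding cond_prob_def using \<open>0 < c\<close>
    by (cases "measure (?T N) C = 0") (simp_all add: divide_le_eq field_simps)
qed

lemma Delta_commute: "Delta n \<sigma> \<tau> = Delta n \<tau> \<sigma>"
  unfolding Delta_def by auto

lemma finite_Delta: "finite (Delta n \<sigma> \<tau>)"
  unfolding Delta_def by auto

lemma hdist_flip:
  assumes "v < n"
  shows "real (hdist n (flip \<sigma> v) \<mu>) = real (hdist n \<sigma> \<mu>) + (if v \<in> Delta n \<sigma> \<mu> then -1 else 1)"
proof (cases "v \<in> Delta n \<sigma> \<mu>")
  case True
  then have "Delta n (flip \<sigma> v) \<mu> = Delta n \<sigma> \<mu> - {v}"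
    by (auto simp: Delta_def flip_def)
  moreover have "card (Delta n \<sigma> \<mu>) \<ge> 1"
    using True finite_Delta by (metis One_nat_def Suc_leI card_gt_0_iff empty_iff)
  ultimately show ?thesis
    using True by (simp add: hdist_def finite_Delta card_Diff_singleton)
next
  case False
  with assms have "Delta n (flip \<sigma> v) \<mu> = insert v (Delta n \<sigma> \<mu>)"
    by (auto simp: Delta_def flip_def)
  with False show ?thesis
    by (simp add: hdist_def finite_Delta)
qed

lemma potential_flip:
  assumes "v < n"
  shows "3 powr (a - real (hdist n (flip \<sigma> v) \<mu>))
    = 3 powr (a - real (hdist n \<sigma> \<mu>)) * (if v \<in> Delta n \<sigma> \<mu> then 3 else 1 / 3)"
  by (simp add: hdist_flip[OF assms] powr_diff powr_add diff_add_eq_diff_diff_swap)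

lemma finite_unsat_idx: "finite (unsat_idx \<Phi> \<sigma>)"
  unfolding unsat_idx_def by auto

lemma nn_integral_walk_step:
  assumes "unsat_idx \<Phi> \<sigma> \<noteq> {}" "0 < k" "\<And>x. 0 \<le> f x"
  shows "(\<integral>\<^sup>+x. ennreal (f x) \<partial>walk_step k \<Phi> \<sigma>)
    = ennreal ((\<Sum>i\<in>unsat_idx \<Phi> \<sigma>. \<Sum>j<k. f (flip \<sigma> (fst (\<Phi> ! i ! j)))) / (real k * real (numU \<Phi> \<sigma>)))"
proof -
  let ?U = "unsat_idx \<Phi> \<sigma>" and ?g = "\<lambda>i j. f (flip \<sigma> (fst (\<Phi> ! i ! j)))"
  have "{..<k} \<noteq> {}"
    using \<open>0 < k\<close> by auto
  then have "(\<integral>\<^sup>+x. ennreal (f x) \<partial>walk_step k \<Phi> \<sigma>)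
      = (\<Sum>i\<in>?U. ennreal (\<Sum>j<k. ?g i j) / ennreal (real k)) / ennreal (real (card ?U))"
    using assms(1,3) finite_unsat_idx[of \<Phi> \<sigma>]
    by (simp add: walk_step_def nn_integral_pmf_of_set ennreal_of_nat_eq_real_of_nat sum_nonneg)
  also have "\<dots> = ennreal ((\<Sum>i\<in>?U. \<Sum>j<k. ?g i j) / (real k * real (card ?U)))"
    using assms finite_unsat_idx[of \<Phi> \<sigma>]
    by (simp add: divide_ennreal sum_nonneg card_gt_0_iff sum_divide_distrib[symmetric])
  finally show ?thesis
    by (simp add: numU_def)
qed

lemma walk_step_potential_drift:
  assumes \<Phi>: "kcnf n k \<Phi>" and "0 < k" and unsat: "unsat_idx \<Phi> \<sigma> \<noteq> {}"
    and X: "real (Xcnt k \<Phi> (Delta n \<sigma> \<mu>) \<sigma>) \<le> real k * real (numU \<Phi> \<sigma>) / 4"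
  shows "(\<integral>\<^sup>+x. ennreal (3 powr (a - real (hdist n x \<mu>))) \<partial>walk_step k \<Phi> \<sigma>)
    \<le> ennreal (3 powr (a - real (hdist n \<sigma> \<mu>)))"
proof -
  let ?U = "unsat_idx \<Phi> \<sigma>" and ?D = "Delta n \<sigma> \<mu>" and ?v = "\<lambda>i j. fst (\<Phi> ! i ! j)"
  let ?W = "\<lambda>x. 3 powr (a - real (hdist n x \<mu>))"
  have var: "?v i j < n" if "i \<in> ?U" "j < k" for i j
  proof -
    have "\<Phi> ! i \<in> set \<Phi>"
      using that by (simp add: unsat_idx_def)
    with \<Phi> that show ?thesis
      unfolding kcnf_def by (metis nth_mem)
  qed
  have count: "(\<Sum>i\<in>?U. \<Sum>j<k. 1 / 3 + 8 / 3 * (if ?v i j \<in> ?D then 1 else 0))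
      = real k * real (numU \<Phi> \<sigma>) / 3 + 8 / 3 * real (Xcnt k \<Phi> ?D \<sigma>)"
    by (simp add: Xcnt_def numU_def sum.distrib sum_distrib_left if_distrib[of real] mult.commute
        cong: if_cong)
  have "(\<Sum>i\<in>?U. \<Sum>j<k. ?W (flip \<sigma> (?v i j)))
      = ?W \<sigma> * (\<Sum>i\<in>?U. \<Sum>j<k. 1 / 3 + 8 / 3 * (if ?v i j \<in> ?D then 1 else 0))"
    unfolding sum_distrib_left by (intro sum.cong refl) (simp add: potential_flip var)
  also have "\<dots> = ?W \<sigma> * (real k * real (numU \<Phi> \<sigma>) / 3 + 8 / 3 * real (Xcnt k \<Phi> ?D \<sigma>))"
    by (simp only: count)
  also have "\<dots> \<le> ?W \<sigma> * (real k * real (numU \<Phi> \<sigma>))"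
    using X by (intro mult_left_mono) simp_all
  finally have "(\<Sum>i\<in>?U. \<Sum>j<k. ?W (flip \<sigma> (?v i j))) / (real k * real (numU \<Phi> \<sigma>)) \<le> ?W \<sigma>"
    using \<open>0 < k\<close> unsat finite_unsat_idx[of \<Phi> \<sigma>]
    by (simp add: divide_le_eq numU_def card_gt_0_iff)
  then show ?thesis
    by (simp add: nn_integral_walk_step[OF unsat \<open>0 < k\<close>] ennreal_leI)
qed

lemma kappa_nonneg: "0 \<le> kappa k"
  unfolding kappa_def by (cases "k = 0") auto

lemma Dball_mono:
  assumes "r1' \<le> r1" "r2 \<le> r2'"
  shows "Dball n k \<sigma> r1 r2 \<subseteq> Dball n k \<sigma> r1' r2'"
proof -
  have "\<lfloor>r1' * kappa k * real n\<rfloor> \<le> \<lfloor>r1 * kappa k * real n\<rfloor>"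
    "\<lfloor>r2 * kappa k * real n\<rfloor> \<le> \<lfloor>r2' * kappa k * real n\<rfloor>"
    using assms kappa_nonneg[of k] by (auto intro!: floor_mono mult_right_mono)
  then show ?thesis
    unfolding Dball_def by auto
qed

lemma unsat_idx_nonempty_if_notin_Tset:
  assumes "\<sigma> \<in> assigns n" "\<sigma> \<notin> Tset n k \<Phi>"
  shows "unsat_idx \<Phi> \<sigma> \<noteq> {}"
proof
  assume "unsat_idx \<Phi> \<sigma> = {}"
  then have "real (numU \<Phi> \<sigma>) \<le> real n * rho n k \<Phi> / 10"
    by (simp add: numU_def rho_def)
  with assms show False
    by (simp add: Tset_def)
qed

lemma walk_step_potential_drift_near_mist:
  assumes "kcnf n k \<Phi>" "0 < k" "Q3 n k \<Phi> M" "\<mu> \<in> M"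
    and \<sigma>: "\<sigma> \<in> Dball n k \<mu> 0 100 - Tset n k \<Phi>"
  shows "(\<integral>\<^sup>+x. ennreal (3 powr (a - real (hdist n x \<mu>))) \<partial>walk_step k \<Phi> \<sigma>)
    \<le> ennreal (3 powr (a - real (hdist n \<sigma> \<mu>)))"
proof (rule walk_step_potential_drift)
  show "unsat_idx \<Phi> \<sigma> \<noteq> {}"
    using \<sigma> by (intro unsat_idx_nonempty_if_notin_Tset) (auto simp: Dball_def)
  have "real (Xcnt k \<Phi> (Delta n \<mu> \<sigma>) \<sigma>) \<le> real k * real (numU \<Phi> \<sigma>) / 10"
    using assms by (auto simp: Q3_def)
  then show "real (Xcnt k \<Phi> (Delta n \<sigma> \<mu>) \<sigma>) \<le> real k * real (numU \<Phi> \<sigma>) / 4"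
    by (simp add: Delta_commute)
qed (use assms in auto)

lemma determined_upto_Hevent: "t1 \<le> t2 \<Longrightarrow> determined_upto t2 (Hevent n k \<Phi> \<mu> t1 t2)"
  by (auto simp: determined_upto_def Hevent_def nth_append_left)

lemma inverse_three_powr_floor_gap_le:
  fixes x :: real
  assumes "1 \<le> x"
  shows "1 / 3 powr real_of_int (\<lfloor>10 * x\<rfloor> - \<lfloor>5 * x\<rfloor>) \<le> exp (- x / 2)"
proof -
  define e where "e = real_of_int (\<lfloor>10 * x\<rfloor> - \<lfloor>5 * x\<rfloor>)"
  have "x / 2 \<le> e"
    using assms unfolding e_def by linarith
  have "1 \<le> ln (3 :: real)"
    using ln_ge_iff[of 3 1] exp_le by simp
  then have "e \<le> e * ln 3"
    using \<open>x / 2 \<le> e\<close> assms by (simp add: mult_le_cancel_left1)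
  then have "1 / 3 powr e \<le> exp (- e)"
    by (simp add: powr_def exp_minus field_simps)
  also have "\<dots> \<le> exp (- x / 2)"
    using \<open>x / 2 \<le> e\<close> by simp
  finally show ?thesis
    unfolding e_def .
qed

lemma one_le_kappa_mul:
  assumes "2 \<le> k" "nat \<lceil>1 / kappa k\<rceil> \<le> n"
  shows "1 \<le> kappa k * real n"
proof -
  have "0 < kappa k"
    using assms(1) by (simp add: kappa_def)
  moreover have "1 / kappa k \<le> real n"
    using assms(2) by linarith
  ultimately show ?thesis
    by (simp add: field_simps)
qed

lemma cond_prob_Hevent_le:
  assumes "kcnf n k \<Phi>" "Q3 n k \<Phi> M" "\<mu> \<in> M"
    and x: "1 \<le> kappa k * real n"
    and \<tau>1: "int (hdist n \<tau>1 \<mu>) = \<lfloor>10 * kappa k * real n\<rfloor>"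
    and C: "determined_upto t1 C" "\<And>xs. xs \<in> C \<Longrightarrow> xs ! t1 = \<tau>1"
    and "t1 \<le> t2" "t2 \<le> N"
  shows "cond_prob (walk_traj n k \<Phi> N) (Hevent n k \<Phi> \<mu> t1 t2) C \<le> exp (- kappa k * real n / 2)"
proof -
  define a where "a = \<lfloor>10 * kappa k * real n\<rfloor>"
  define b where "b = \<lfloor>5 * kappa k * real n\<rfloor>"
  define W where "W = (\<lambda>\<sigma>. 3 powr (real_of_int a - real (hdist n \<sigma> \<mu>)))"
  define R where "R = Dball n k \<mu> 5 10 - Tset n k \<Phi>"
  have "0 < k"
    using x by (cases k) (auto simp: kappa_def)
  have "(\<integral>\<^sup>+x. ennreal (W x) \<partial>walk_step k \<Phi> \<sigma>) \<le> ennreal (W \<sigma>)" if "\<sigma> \<in> R" for \<sigma>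
    using that Dball_mono[of 0 5 10 100] unfolding W_def R_def
    by (intro walk_step_potential_drift_near_mist[OF assms(1) \<open>0 < k\<close> assms(2,3)]) auto
  moreover have "W (xs ! t1) \<le> 1" if "xs \<in> C" for xs
  proof -
    have "real_of_int a = real (hdist n \<tau>1 \<mu>)"
      using \<tau>1 unfolding a_def by (metis of_int_of_nat_eq)
    then show ?thesis
      using C(2)[OF that] by (simp add: W_def)
  qed
  moreover have "xs ! t \<in> R" if "xs \<in> Hevent n k \<Phi> \<mu> t1 t2" "t1 \<le> t" "t < t2" for xs t
    using that by (simp add: Hevent_def R_def)
  moreover have "3 powr real_of_int (a - b) \<le> W (xs ! t2)" if "xs \<in> Hevent n k \<Phi> \<mu> t1 t2" for xs
    using that by (simp add: Hevent_def W_def b_def)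
  ultimately have "cond_prob (walk_traj n k \<Phi> N) (Hevent n k \<Phi> \<mu> t1 t2) C \<le> 1 / 3 powr real_of_int (a - b)"
    using assms by (intro cond_prob_walk_traj_le[where R = R and W = W]) (auto intro: determined_upto_Hevent)
  also have "\<dots> \<le> exp (- kappa k * real n / 2)"
    using inverse_three_powr_floor_gap_le[OF x] by (simp add: a_def b_def mult.assoc)
  finally show ?thesis .
qed

theorem mainTheorem6:
  "\<exists>k0. \<forall>k\<ge>k0. \<exists>n0. \<forall>n\<ge>n0. \<forall>\<Phi> M \<tau>1 \<mu> t1 t2.
     kcnf n k \<Phi> \<and> is_mist n k \<Phi> M \<and> Q1 n k M \<and> Q2 n k M \<and> Q3 n k \<Phi> M
     \<and> \<tau>1 \<in> assigns n \<and> \<tau>1 \<notin> Tset n k \<Phi> \<and> \<mu> \<in> M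
     \<and> int (hdist n \<tau>1 \<mu>) = \<lfloor>10 * kappa k * real n\<rfloor>
     \<and> 1 \<le> t1 \<and> t1 \<le> t2 \<and> t2 \<le> nat \<lceil>exp (real n / (real k)\<^sup>2)\<rceil>
     \<longrightarrow> cond_prob (walk_traj n k \<Phi> (nat \<lceil>exp (real n / (real k)\<^sup>2)\<rceil>))
           (Hevent n k \<Phi> \<mu> t1 t2)
           {xs. xs ! 0 \<notin> Dmist n k M \<and> xs ! t1 = \<tau>1}
         \<le> exp (- kappa k * real n / 2)"
  apply (rule exI[of _ 2], intro allI impI)
  subgoal for k
    apply (rule exI[of _ "nat \<lceil>1 / kappa k\<rceil>"], intro allI impI, elim conjE)
    subgoal for n \<Phi> M \<tau>1 \<mu> t1 t2
      unfolding Collect_conj_eq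
      by (intro cond_prob_Hevent_le one_le_kappa_mul determined_upto_Int determined_upto_nth) auto
    done
  done

end
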